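(* Let $M$ be a Hausdorff space. (a) Every continuous function $f:M\to\mathbb{R}$ induces a continuous spectral family $\sigma_f:\mathbb{R}\to\mathcal{T}(M)$ by $\sigma_f(\lambda):=\mathrm{int}(f^{-1}(]-\infty,\lambda]))$; its admissible domain $\mathcal{D}(\sigma_f)$ equals $M$, and $f_{\sigma_f}=f$. (b) Conversely, if $\sigma:\mathbb{R}\to\mathcal{T}(M)$ is a continuous spectral family, then the induced function $f_\sigma:\mathcal{D}(\sigma)\to\mathbb{R}$ is continuous, and the spectral family $\sigma_{f_\sigma}$ in $\mathcal{T}(\mathcal{D}(\sigma))$ it induces satisfies $\sigma_{f_\sigma}(\lambda)=\sigma(\lambda)\cap\mathcal{D}(\sigma)$ for all $\lambda\in\mathbb{R}$.
   Context: $\mathcal{T}(M)$ is the complete lattice of open subsets of $M$ with $\bigvee_k U_k=\bigcup_k U_k$ and $\bigwedge_k U_k=\mathrm{int}(\bigcap_k U_k)$. A spectral family in $\mathcal{T}(M)$ is a map $\sigma:\mathbb{R}\to\mathcal{T}(M)$ with $\sigma(\lambda)\subseteq\sigma(\mu)$ for $\lambda\le\mu$, $\sigma(\lambda)=\mathrm{int}\bigcap_{\mu>\lambda}\sigma(\mu)$ for all $\lambda$, $\mathrm{int}\bigcap_\lambda\sigma(\lambda)=\emptyset$ and $\bigcup_\lambda\sigma(\lambda)=M$. It is continuous if $\overline{\sigma(\lambda)}\subseteq\sigma(\mu)$ whenever $\lambda<\mu$. The admissible domain is $\mathcal{D}(\sigma):=M\setminus\bigcap_{\lambda}\sigma(\lambda)$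 and the induced function is $f_\sigma(x):=\inf\{\lambda : x\in\sigma(\lambda)\}$ for $x\in\mathcal{D}(\sigma)$; for a function $g$ on a space $N$, $\sigma_g(\lambda):=\mathrm{int}(g^{-1}(]-\infty,\lambda]))$ in $\mathcal{T}(N)$. *)

theory Defs
  imports "HOL-Analysis.Analysis"
begin

text \<open>Spectral families in the lattice of open subsets of a topological space X.
  Meets in T(M) are interiors of intersections.\<close>

definition spectral_family :: "'a topology \<Rightarrow> (real \<Rightarrow> 'a set) \<Rightarrow> bool" where
  "spectral_family X \<sigma> \<longleftrightarrow>
     (\<forall>l. openin X (\<sigma> l)) \<and>
     (\<forall>l m. l \<le> m \<longrightarrow> \<sigma> l \<subseteq> \<sigma> m) \<and>
     (\<forall>l. \<sigma> l = X interior_of (\<Inter>m\<in>{l<..}. \<sigma> m)) \<and>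
     X interior_of (\<Inter>l. \<sigma> l) = {} \<and>
     (\<Union>l. \<sigma> l) = topspace X"

definition continuous_spectral_family :: "'a topology \<Rightarrow> (real \<Rightarrow> 'a set) \<Rightarrow> bool" where
  "continuous_spectral_family X \<sigma> \<longleftrightarrow>
     spectral_family X \<sigma> \<and> (\<forall>l m. l < m \<longrightarrow> X closure_of (\<sigma> l) \<subseteq> \<sigma> m)"

definition admissible_domain :: "'a topology \<Rightarrow> (real \<Rightarrow> 'a set) \<Rightarrow> 'a set" where
  "admissible_domain X \<sigma> = topspace X - (\<Inter>l. \<sigma> l)"

definition induced_function :: "(real \<Rightarrow> 'a set) \<Rightarrow> 'a \<Rightarrow> real" where
  "induced_function \<sigma> x = Inf {l. x \<in> \<sigma> l}"

definition spectral_family_of :: "'a topology \<Rightarrow> ('a \<Rightarrow> real) \<Rightarrow> real \<Rightarrow> 'a set" where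
  "spectral_family_of X g l = X interior_of {x \<in> topspace X. g x \<le> l}"

end

theory Submission
  imports Defs
begin

(* For continuous f, the level set int {f \<le> l} lies between the open set {f < l} and the closed
   set {f \<le> l}; hence its closure stays inside every int {f \<le> m} with m > l, and f x is squeezed
   between the infima of [f x, \<infinity>) and (f x, \<infinity>).
   Conversely, continuity of \<sigma> turns every intersection \<Inter>m>l. \<sigma> m into the closed set
   \<Inter>m>l. closure (\<sigma> m). On the admissible domain D this set cuts out {f\<^sub>\<sigma> \<le> l}, while
   the open set \<Union>l<a. \<sigma> l cuts out {f\<^sub>\<sigma> < a}; D itself is the complement of the closed set \<Inter>l. \<sigma> l.
   Right continuity of \<sigma> then gives int (\<Inter>m>l. \<sigma> m \<inter> D) = \<sigma> l \<inter> D. *)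

section \<open>The spectral family induced by a function\<close>

lemma Inter_greaterThan_sublevel:
  fixes g :: "'a \<Rightarrow> real"
  shows "(\<Inter>m\<in>{l<..}. {x\<in>A. g x \<le> m}) = {x\<in>A. g x \<le> l}"
proof
  show "(\<Inter>m\<in>{l<..}. {x\<in>A. g x \<le> m}) \<subseteq> {x\<in>A. g x \<le> l}"
  proof
    fix x assume x: "x \<in> (\<Inter>m\<in>{l<..}. {x\<in>A. g x \<le> m})"
    have "l + 1 \<in> {l<..}"
      by simp
    with x have "x \<in> A"
      by blast
    moreover have "g x \<le> m" if "l < m" for m
      using x that by simp
    ultimately show "x \<in> {x\<in>A. g x \<le> l}"
      by (simp add: dense_ge)
  qed
  show "{x\<in>A. g x \<le> l} \<subseteq> (\<Inter>m\<in>{l<..}. {x\<in>A. g x \<le> m})"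
    by auto
qed

lemma openin_spectral_family_of: "openin X (spectral_family_of X g l)"
  by (simp add: spectral_family_of_def)

lemma spectral_family_of_subset: "spectral_family_of X g l \<subseteq> {x\<in>topspace X. g x \<le> l}"
  by (simp add: spectral_family_of_def interior_of_subset)

lemma spectral_family_of_mono: "l \<le> m \<Longrightarrow> spectral_family_of X g l \<subseteq> spectral_family_of X g m"
  unfolding spectral_family_of_def by (intro interior_of_mono) auto

lemma spectral_family_of_right_continuous:
  "spectral_family_of X g l = X interior_of (\<Inter>m\<in>{l<..}. spectral_family_of X g m)"
proof
  have "spectral_family_of X g l \<subseteq> spectral_family_of X g m" if "m \<in> {l<..}" for m
    using that by (simp add: spectral_family_of_mono)
  then have "spectral_family_of X g l \<subseteq> (\<Inter>m\<in>{l<..}. spectral_family_of X g m)"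
    by (rule INT_greatest)
  then show "spectral_family_of X g l \<subseteq> X interior_of (\<Inter>m\<in>{l<..}. spectral_family_of X g m)"
    by (rule interior_of_maximal[OF _ openin_spectral_family_of])
  have "(\<Inter>m\<in>{l<..}. spectral_family_of X g m) \<subseteq> (\<Inter>m\<in>{l<..}. {x\<in>topspace X. g x \<le> m})"
    using spectral_family_of_subset by (rule INF_mono')
  then show "X interior_of (\<Inter>m\<in>{l<..}. spectral_family_of X g m) \<subseteq> spectral_family_of X g l"
    unfolding Inter_greaterThan_sublevel spectral_family_of_def[of X g l] by (rule interior_of_mono)
qed

lemma Inter_spectral_family_of: "(\<Inter>l. spectral_family_of X g l) = {}"
proof -
  have "x \<notin> spectral_family_of X g (g x - 1)" for x
    using spectral_family_of_subset by fastforce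
  then show ?thesis by blast
qed

lemma admissible_domain_spectral_family_of:
  "admissible_domain X (spectral_family_of X g) = topspace X"
  by (simp add: admissible_domain_def Inter_spectral_family_of)

lemma mem_spectral_family_of_less:
  assumes f: "continuous_map X euclideanreal f" and "x \<in> topspace X" "f x < l"
  shows "x \<in> spectral_family_of X f l"
proof -
  have "openin X {x\<in>topspace X. f x < l}"
    using f by (simp add: continuous_map_upper_lower_semicontinuous_lt)
  then have "{x\<in>topspace X. f x < l} \<subseteq> spectral_family_of X f l"
    unfolding spectral_family_of_def by (rule interior_of_maximal[rotated]) auto
  with assms show ?thesis by blast
qed

lemma closure_of_spectral_family_of_subset:
  assumes f: "continuous_map X euclideanreal f" and "l < m"
  shows "X closure_of (spectral_family_of X f l) \<subseteq> spectral_family_of X f m"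
proof -
  have "X closure_of (spectral_family_of X f l) \<subseteq> X closure_of {x\<in>topspace X. f x \<le> l}"
    by (rule closure_of_mono[OF spectral_family_of_subset])
  also have "\<dots> = {x\<in>topspace X. f x \<le> l}"
    using f by (simp add: continuous_map_upper_lower_semicontinuous_le closure_of_closedin)
  also have "\<dots> \<subseteq> spectral_family_of X f m"
    using mem_spectral_family_of_less[OF f] \<open>l < m\<close> by fastforce
  finally show ?thesis .
qed

lemma Union_spectral_family_of:
  assumes f: "continuous_map X euclideanreal f"
  shows "(\<Union>l. spectral_family_of X f l) = topspace X"
proof
  show "(\<Union>l. spectral_family_of X f l) \<subseteq> topspace X"
    by (intro UN_least openin_subset[OF openin_spectral_family_of])
  show "topspace X \<subseteq> (\<Union>l. spectral_family_of X f l)"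
  proof
    fix x assume "x \<in> topspace X"
    then have "x \<in> spectral_family_of X f (f x + 1)"
      by (simp add: mem_spectral_family_of_less[OF f])
    then show "x \<in> (\<Union>l. spectral_family_of X f l)"
      by (rule UN_I[OF UNIV_I])
  qed
qed

lemma continuous_spectral_family_of:
  assumes f: "continuous_map X euclideanreal f"
  shows "continuous_spectral_family X (spectral_family_of X f)"
  unfolding continuous_spectral_family_def spectral_family_def
  by (intro conjI allI impI openin_spectral_family_of spectral_family_of_mono
      spectral_family_of_right_continuous closure_of_spectral_family_of_subset[OF f]
      Union_spectral_family_of[OF f])
     (simp_all add: Inter_spectral_family_of)

lemma induced_function_spectral_family_of:
  assumes f: "continuous_map X euclideanreal f" and x: "x \<in> topspace X"
  shows "induced_function (spectral_family_of X f) x = f x"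
proof -
  define L where "L = {l. x \<in> spectral_family_of X f l}"
  have upper: "{f x<..} \<subseteq> L"
    using mem_spectral_family_of_less[OF f x] by (auto simp: L_def)
  have lower: "L \<subseteq> {f x..}"
    using spectral_family_of_subset by (fastforce simp: L_def)
  have "L \<noteq> {}"
    using upper by auto
  then have "Inf {f x..} \<le> Inf L"
    using lower by (intro cInf_superset_mono) auto
  moreover have "Inf L \<le> Inf {f x<..}"
    using lower upper by (intro cInf_superset_mono) (auto intro: bdd_below_mono)
  ultimately show ?thesis
    by (simp add: induced_function_def L_def[symmetric])
qed

section \<open>Spectral families and their induced functions\<close>

lemma
  assumes "spectral_family X \<sigma>"
  shows spectral_family_openin: "openin X (\<sigma> l)"
    and spectral_family_mono: "l \<le> m \<Longrightarrow> \<sigma> l \<subseteq> \<sigma> m"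
    and spectral_family_right_continuous: "\<sigma> l = X interior_of (\<Inter>m\<in>{l<..}. \<sigma> m)"
    and spectral_family_interior_Inter: "X interior_of (\<Inter>l. \<sigma> l) = {}"
    and spectral_family_Union: "(\<Union>l. \<sigma> l) = topspace X"
  using assms unfolding spectral_family_def by iprover+

lemma spectral_family_subtopology_open:
  assumes \<sigma>: "spectral_family X \<sigma>" and U: "openin X U"
  shows "spectral_family (subtopology X U) (\<lambda>l. \<sigma> l \<inter> U)"
  unfolding spectral_family_def
proof (intro conjI allI impI)
  show "openin (subtopology X U) (\<sigma> l \<inter> U)" for l
    by (simp add: openin_subtopology_Int spectral_family_openin[OF \<sigma>])
  show "\<sigma> l \<inter> U \<subseteq> \<sigma> m \<inter> U" if "l \<le> m" for l m
    using spectral_family_mono[OF \<sigma> that] by blast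
  show "\<sigma> l \<inter> U = subtopology X U interior_of (\<Inter>m\<in>{l<..}. \<sigma> m \<inter> U)" for l
  proof -
    have "subtopology X U interior_of (\<Inter>m\<in>{l<..}. \<sigma> m \<inter> U)
        = U \<inter> X interior_of ((\<Inter>m\<in>{l<..}. \<sigma> m) \<inter> U)"
      by (simp add: interior_of_subtopology_open[OF U] INT_Int_distrib)
    also have "\<dots> = \<sigma> l \<inter> U"
      by (auto simp: interior_of_Int interior_of_openin[OF U]
          spectral_family_right_continuous[OF \<sigma>, symmetric])
    finally show ?thesis ..
  qed
  have "X interior_of (\<Inter>l. \<sigma> l \<inter> U) \<subseteq> X interior_of (\<Inter>l. \<sigma> l)"
    by (intro interior_of_mono) blast
  then show "subtopology X U interior_of (\<Inter>l. \<sigma> l \<inter> U) = {}"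
    using spectral_family_interior_Inter[OF \<sigma>] by (simp add: interior_of_subtopology_open[OF U])
  show "(\<Union>l. \<sigma> l \<inter> U) = topspace (subtopology X U)"
    using spectral_family_Union[OF \<sigma>] unfolding topspace_subtopology by blast
qed

lemma bdd_below_spectral_levels:
  assumes \<sigma>: "spectral_family X \<sigma>" and x: "x \<in> admissible_domain X \<sigma>"
  shows "bdd_below {l. x \<in> \<sigma> l}"
proof -
  obtain l\<^sub>0 where l\<^sub>0: "x \<notin> \<sigma> l\<^sub>0"
    using x by (auto simp: admissible_domain_def)
  have "l\<^sub>0 \<le> l" if "x \<in> \<sigma> l" for l
  proof (rule ccontr)
    assume "\<not> l\<^sub>0 \<le> l"
    then have "\<sigma> l \<subseteq> \<sigma> l\<^sub>0"
      by (intro spectral_family_mono[OF \<sigma>]) simp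
    with that l\<^sub>0 show False
      by blast
  qed
  then show ?thesis
    by (intro bdd_belowI[of _ l\<^sub>0]) simp
qed

lemma spectral_levels_nonempty:
  assumes \<sigma>: "spectral_family X \<sigma>" and x: "x \<in> admissible_domain X \<sigma>"
  shows "{l. x \<in> \<sigma> l} \<noteq> {}"
proof -
  have "x \<in> (\<Union>l. \<sigma> l)"
    using x by (simp add: admissible_domain_def spectral_family_Union[OF \<sigma>])
  then show ?thesis
    by auto
qed

lemma induced_function_le:
  assumes "spectral_family X \<sigma>" "x \<in> admissible_domain X \<sigma>" "x \<in> \<sigma> l"
  shows "induced_function \<sigma> x \<le> l"
  unfolding induced_function_def using assms by (intro cInf_lower bdd_below_spectral_levels) auto

lemma induced_function_less_imp_mem:
  assumes \<sigma>: "spectral_family X \<sigma>" and x: "x \<in> admissible_domain X \<sigma>"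
    and less: "induced_function \<sigma> x < l"
  shows "x \<in> \<sigma> l"
proof -
  obtain l' where "x \<in> \<sigma> l'" "l' < l"
    using less cInf_less_iff[OF spectral_levels_nonempty[OF \<sigma> x] bdd_below_spectral_levels[OF \<sigma> x]]
    by (auto simp: induced_function_def)
  then show ?thesis
    using spectral_family_mono[OF \<sigma>, of l' l] by auto
qed

lemma induced_function_less_iff:
  assumes \<sigma>: "spectral_family X \<sigma>" and x: "x \<in> admissible_domain X \<sigma>"
  shows "induced_function \<sigma> x < a \<longleftrightarrow> x \<in> (\<Union>l\<in>{..<a}. \<sigma> l)"
proof
  assume "induced_function \<sigma> x < a"
  then obtain l where "induced_function \<sigma> x < l" "l < a"
    using dense by blast
  then show "x \<in> (\<Union>l\<in>{..<a}. \<sigma> l)"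
    using induced_function_less_imp_mem[OF \<sigma> x] by auto
next
  assume "x \<in> (\<Union>l\<in>{..<a}. \<sigma> l)"
  then obtain l where "x \<in> \<sigma> l" "l < a"
    by auto
  then show "induced_function \<sigma> x < a"
    using induced_function_le[OF \<sigma> x] by fastforce
qed

lemma induced_function_le_iff:
  assumes \<sigma>: "spectral_family X \<sigma>" and x: "x \<in> admissible_domain X \<sigma>"
  shows "induced_function \<sigma> x \<le> a \<longleftrightarrow> x \<in> (\<Inter>m\<in>{a<..}. \<sigma> m)"
proof
  assume "induced_function \<sigma> x \<le> a"
  then show "x \<in> (\<Inter>m\<in>{a<..}. \<sigma> m)"
    using induced_function_less_imp_mem[OF \<sigma> x] by auto
next
  assume levels: "x \<in> (\<Inter>m\<in>{a<..}. \<sigma> m)"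
  show "induced_function \<sigma> x \<le> a"
  proof (rule dense_ge)
    fix m assume "a < m"
    with levels show "induced_function \<sigma> x \<le> m"
      by (intro induced_function_le[OF \<sigma> x]) auto
  qed
qed

section \<open>Continuous spectral families\<close>

lemma continuous_spectral_family_imp_spectral_family:
  "continuous_spectral_family X \<sigma> \<Longrightarrow> spectral_family X \<sigma>"
  by (simp add: continuous_spectral_family_def)

lemma closedin_Inter_continuous_spectral_family:
  assumes \<sigma>: "continuous_spectral_family X \<sigma>" and "A \<noteq> {}"
    and no_min: "\<And>m. m \<in> A \<Longrightarrow> \<exists>m'\<in>A. m' < m"
  shows "closedin X (\<Inter>m\<in>A. \<sigma> m)"
proof -
  have sf: "spectral_family X \<sigma>"
    using \<sigma> by (rule continuous_spectral_family_imp_spectral_family)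
  have cl: "X closure_of \<sigma> l \<subseteq> \<sigma> m" if "l < m" for l m
    using \<sigma> that by (simp add: continuous_spectral_family_def)
  have "(\<Inter>m\<in>A. \<sigma> m) = (\<Inter>m\<in>A. X closure_of \<sigma> m)"
  proof
    show "(\<Inter>m\<in>A. \<sigma> m) \<subseteq> (\<Inter>m\<in>A. X closure_of \<sigma> m)"
      by (intro INF_mono' closure_of_subset openin_subset spectral_family_openin[OF sf])
    show "(\<Inter>m\<in>A. X closure_of \<sigma> m) \<subseteq> (\<Inter>m\<in>A. \<sigma> m)"
    proof (rule INT_greatest)
      fix m assume "m \<in> A"
      then obtain m' where "m' \<in> A" "m' < m"
        using no_min by blast
      then have "(\<Inter>m\<in>A. X closure_of \<sigma> m) \<subseteq> X closure_of \<sigma> m'"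
        by (intro INT_lower)
      also have "\<dots> \<subseteq> \<sigma> m"
        using cl[OF \<open>m' < m\<close>] .
      finally show "(\<Inter>m\<in>A. X closure_of \<sigma> m) \<subseteq> \<sigma> m" .
    qed
  qed
  then show ?thesis
    using \<open>A \<noteq> {}\<close> by (simp add: closedin_INT)
qed

lemma openin_admissible_domain:
  assumes "continuous_spectral_family X \<sigma>"
  shows "openin X (admissible_domain X \<sigma>)"
proof -
  have "closedin X (\<Inter>l. \<sigma> l)"
    using assms by (rule closedin_Inter_continuous_spectral_family) (auto intro: lt_ex)
  then show ?thesis
    unfolding admissible_domain_def by (rule openin_diff[OF openin_topspace])
qed

lemma continuous_map_induced_function:
  assumes \<sigma>: "continuous_spectral_family X \<sigma>"
  shows "continuous_map (subtopology X (admissible_domain X \<sigma>)) euclideanreal (induced_function \<sigma>)"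
proof -
  define D where "D = admissible_domain X \<sigma>"
  have sf: "spectral_family X \<sigma>"
    using \<sigma> by (rule continuous_spectral_family_imp_spectral_family)
  have top: "topspace (subtopology X D) = D"
    by (auto simp: D_def admissible_domain_def)
  have "{x \<in> D. induced_function \<sigma> x < a} = D \<inter> (\<Union>l\<in>{..<a}. \<sigma> l)" for a
    using induced_function_less_iff[OF sf] by (auto simp: D_def)
  moreover have "openin X (\<Union>l\<in>{..<a}. \<sigma> l)" for a
    by (intro openin_Union) (auto intro: spectral_family_openin[OF sf])
  moreover have "{x \<in> D. induced_function \<sigma> x \<le> a} = D \<inter> (\<Inter>m\<in>{a<..}. \<sigma> m)" for a
    using induced_function_le_iff[OF sf] by (auto simp: D_def)
  moreover have "closedin X (\<Inter>m\<in>{a<..}. \<sigma> m)" for a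
  proof (rule closedin_Inter_continuous_spectral_family[OF \<sigma>])
    show "{a<..} \<noteq> {}"
      using gt_ex[of a] by auto
    show "\<exists>m'\<in>{a<..}. m' < m" if "m \<in> {a<..}" for m
      using that dense[of a m] by auto
  qed
  ultimately show ?thesis
    unfolding continuous_map_upper_lower_semicontinuous_lte top D_def[symmetric]
    by (simp add: openin_subtopology_Int2 closedin_subtopology_Int_closed)
qed

lemma spectral_family_of_induced_function:
  assumes \<sigma>: "continuous_spectral_family X \<sigma>"
  shows "spectral_family_of (subtopology X (admissible_domain X \<sigma>)) (induced_function \<sigma>) l
           = \<sigma> l \<inter> admissible_domain X \<sigma>"
proof -
  define D where "D = admissible_domain X \<sigma>"
  have sf: "spectral_family X \<sigma>"
    using \<sigma> by (rule continuous_spectral_family_imp_spectral_family)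
  have D: "openin X D"
    unfolding D_def using \<sigma> by (rule openin_admissible_domain)
  have "{x \<in> topspace (subtopology X D). induced_function \<sigma> x \<le> l} = (\<Inter>m\<in>{l<..}. \<sigma> m) \<inter> D"
    using induced_function_le_iff[OF sf] by (auto simp: D_def admissible_domain_def)
  then have "spectral_family_of (subtopology X D) (induced_function \<sigma>) l
      = subtopology X D interior_of ((\<Inter>m\<in>{l<..}. \<sigma> m) \<inter> D)"
    by (simp only: spectral_family_of_def)
  also have "\<dots> = D \<inter> X interior_of ((\<Inter>m\<in>{l<..}. \<sigma> m) \<inter> D)"
    by (rule interior_of_subtopology_open[OF D])
  also have "\<dots> = \<sigma> l \<inter> D"
    using spectral_family_right_continuous[OF sf, of l] interior_of_openin[OF D]
    by (auto simp: interior_of_Int)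
  finally show ?thesis
    by (simp add: D_def)
qed

theorem theorem2p37:
  fixes X :: "'a topology"
  assumes "Hausdorff_space X"
  shows "(\<forall>f. continuous_map X euclideanreal f \<longrightarrow>
            continuous_spectral_family X (spectral_family_of X f) \<and>
            admissible_domain X (spectral_family_of X f) = topspace X \<and>
            (\<forall>x\<in>topspace X. induced_function (spectral_family_of X f) x = f x))
       \<and> (\<forall>\<sigma>. continuous_spectral_family X \<sigma> \<longrightarrow>
            continuous_map (subtopology X (admissible_domain X \<sigma>)) euclideanreal
               (induced_function \<sigma>) \<and>
            spectral_family (subtopology X (admissible_domain X \<sigma>))
               (spectral_family_of (subtopology X (admissible_domain X \<sigma>)) (induced_function \<sigma>)) \<and>
            (\<forall>l. spectral_family_of (subtopology X (admissible_domain X \<sigma>)) (induced_function \<sigma>) l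
                  = \<sigma> l \<inter> admissible_domain X \<sigma>))"
proof (intro conjI allI impI ballI)
  fix f assume f: "continuous_map X euclideanreal f"
  show "continuous_spectral_family X (spectral_family_of X f)"
    by (rule continuous_spectral_family_of[OF f])
  show "admissible_domain X (spectral_family_of X f) = topspace X"
    by (rule admissible_domain_spectral_family_of)
  show "induced_function (spectral_family_of X f) x = f x" if "x \<in> topspace X" for x
    by (rule induced_function_spectral_family_of[OF f that])
next
  fix \<sigma> assume \<sigma>: "continuous_spectral_family X \<sigma>"
  show "continuous_map (subtopology X (admissible_domain X \<sigma>)) euclideanreal (induced_function \<sigma>)"
    by (rule continuous_map_induced_function[OF \<sigma>])
  show "spectral_family_of (subtopology X (admissible_domain X \<sigma>)) (induced_function \<sigma>) l
      = \<sigma> l \<inter> admissible_domain X \<sigma>" for l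
    by (rule spectral_family_of_induced_function[OF \<sigma>])
  have "spectral_family (subtopology X (admissible_domain X \<sigma>)) (\<lambda>l. \<sigma> l \<inter> admissible_domain X \<sigma>)"
    using \<sigma> by (intro spectral_family_subtopology_open openin_admissible_domain
        continuous_spectral_family_imp_spectral_family)
  moreover have "spectral_family_of (subtopology X (admissible_domain X \<sigma>)) (induced_function \<sigma>)
      = (\<lambda>l. \<sigma> l \<inter> admissible_domain X \<sigma>)"
    by (intro ext spectral_family_of_induced_function[OF \<sigma>])
  ultimately show "spectral_family (subtopology X (admissible_domain X \<sigma>))
      (spectral_family_of (subtopology X (admissible_domain X \<sigma>)) (induced_function \<sigma>))"
    by simp
qed

end
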